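(* Let $X$ and $Y$ be two arbitrary nonnegative random variables and assume that $\mathbb{P}(Y\le\delta)=0$ for some $\delta>0$. Then, for any $y$ that satisfies $\mathbb{P}(Y<y)>0$, $$\mathbb{P}(Y<y)\cdot\mathbb{E}\left[\frac XY\;\middle|\;Y<y\right]\le\frac1{\delta^2}\cdot\mathbb{P}(Y<y)+\int_{1/\delta^2}^\infty\mathbb{P}(X\ge\sqrt x)\,\mathrm{d}x.$$ *)

theory Defs
  imports "HOL-Probability.Probability"
begin

definition cond_nn_expectation :: "'a measure \<Rightarrow> 'a set \<Rightarrow> ('a \<Rightarrow> ennreal) \<Rightarrow> ennreal" where
  "cond_nn_expectation M A f = (\<integral>\<^sup>+ \<omega> \<in> A. f \<omega> \<partial>M) / emeasure M A"

end

theory Submission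
  imports Defs
begin

text \<open>On the event where the denominator exceeds \<open>\<delta>\<close>, the ratio \<open>X/Y\<close> is at most \<open>X/\<delta>\<close>, which is
  bounded by \<open>1/\<delta>\<^sup>2\<close> when \<open>X \<le> 1/\<delta>\<close> and by \<open>X\<^sup>2\<close> otherwise. Hence
  \<open>E[X/Y; Y < y] \<le> P(Y < y)/\<delta>\<^sup>2 + E[(X\<^sup>2 - 1/\<delta>\<^sup>2)\<^sup>+]\<close>, and by Tonelli the last expectation is
  the integral of the tail \<open>P(X\<^sup>2 > x)\<close> over \<open>x \<ge> 1/\<delta>\<^sup>2\<close>.\<close>

lemma div_le_inverse_square_plus_excess:
  fixes x y \<delta> :: real
  assumes "x \<ge> 0" "y > \<delta>" "\<delta> > 0"
  shows "x / y \<le> 1 / \<delta>\<^sup>2 + max 0 (x\<^sup>2 - 1 / \<delta>\<^sup>2)"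
proof -
  have "x / y \<le> x / \<delta>" using assms by (intro divide_left_mono) auto
  moreover have "x / \<delta> \<le> 1 / \<delta>\<^sup>2 + max 0 (x\<^sup>2 - 1 / \<delta>\<^sup>2)"
  proof (cases "x \<le> 1 / \<delta>")
    case True
    then have "x / \<delta> \<le> (1 / \<delta>) / \<delta>" using assms by (intro divide_right_mono) auto
    then show ?thesis by (simp add: power2_eq_square)
  next
    case False
    then have "x / \<delta> = x * (1 / \<delta>)" by simp
    also have "\<dots> \<le> x * x" using False assms by (intro mult_left_mono) auto
    finally show ?thesis by (simp add: power2_eq_square)
  qed
  ultimately show ?thesis by linarith
qed

lemma emeasure_mult_cond_nn_expectation:
  assumes "emeasure M A \<noteq> 0" "emeasure M A \<noteq> \<infinity>"
  shows "emeasure M A * cond_nn_expectation M A f = (\<integral>\<^sup>+ \<omega> \<in> A. f \<omega> \<partial>M)"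
  using assms unfolding cond_nn_expectation_def
  by (simp add: ennreal_times_divide mult.commute[of "emeasure M A"] ennreal_mult_divide_eq)

lemma nn_integral_excess_eq_tail_integral:
  fixes g :: "'a \<Rightarrow> real" and c :: real
  assumes "sigma_finite_measure M" and [measurable]: "g \<in> borel_measurable M"
  shows "(\<integral>\<^sup>+ \<omega>. ennreal (g \<omega> - c) \<partial>M)
       = (\<integral>\<^sup>+ x \<in> {c..}. emeasure M {\<omega> \<in> space M. x < g \<omega>} \<partial>lborel)"
proof -
  interpret pair_sigma_finite M lborel
    using assms(1) lborel.sigma_finite_measure_axioms by (intro pair_sigma_finite.intro)
  define f :: "'a \<Rightarrow> real \<Rightarrow> ennreal" where
    "f \<omega> x = indicator {p \<in> space (M \<Otimes>\<^sub>M lborel). c \<le> snd p \<and> snd p < g (fst p)} (\<omega>, x)"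
    for \<omega> x
  have f_measurable: "case_prod f \<in> borel_measurable (M \<Otimes>\<^sub>M lborel)"
    unfolding f_def by measurable
  have slice_\<omega>: "(\<integral>\<^sup>+ x. f \<omega> x \<partial>lborel) = ennreal (g \<omega> - c)" if "\<omega> \<in> space M" for \<omega>
  proof -
    have "f \<omega> = indicator {c..<g \<omega>}"
      using that by (auto simp: f_def space_pair_measure indicator_def fun_eq_iff)
    then show ?thesis
      by (cases "c \<le> g \<omega>") (auto simp: ennreal_neg)
  qed
  have slice_x: "(\<integral>\<^sup>+ \<omega>. f \<omega> x \<partial>M) = emeasure M {\<omega> \<in> space M. x < g \<omega>} * indicator {c..} x"
    for x
  proof -
    have "(\<lambda>\<omega>. f \<omega> x) = (\<lambda>\<omega>. indicator {\<omega> \<in> space M. x < g \<omega>} \<omega> * indicator {c..} x)"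
      by (auto simp: f_def space_pair_measure indicator_def fun_eq_iff)
    then show ?thesis
      by (simp add: nn_integral_multc)
  qed
  have "(\<integral>\<^sup>+ \<omega>. ennreal (g \<omega> - c) \<partial>M) = (\<integral>\<^sup>+ \<omega>. (\<integral>\<^sup>+ x. f \<omega> x \<partial>lborel) \<partial>M)"
    by (rule nn_integral_cong) (simp add: slice_\<omega>)
  also have "\<dots> = (\<integral>\<^sup>+ x. (\<integral>\<^sup>+ \<omega>. f \<omega> x \<partial>M) \<partial>lborel)"
    by (rule Fubini'[OF f_measurable, symmetric])
  finally show ?thesis
    by (simp add: slice_x)
qed

lemma set_nn_integral_ratio_le:
  fixes X Y :: "'a \<Rightarrow> real" and \<delta> :: real
  assumes "AE \<omega> in M. Y \<omega> > \<delta>" "\<And>\<omega>. \<omega> \<in> space M \<Longrightarrow> X \<omega> \<ge> 0" "\<delta> > 0"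
    and [measurable]: "A \<in> sets M" "X \<in> borel_measurable M"
  shows "(\<integral>\<^sup>+ \<omega> \<in> A. ennreal (X \<omega> / Y \<omega>) \<partial>M)
       \<le> ennreal (1 / \<delta>\<^sup>2) * emeasure M A + (\<integral>\<^sup>+ \<omega>. ennreal ((X \<omega>)\<^sup>2 - 1 / \<delta>\<^sup>2) \<partial>M)"
proof -
  let ?c = "1 / \<delta>\<^sup>2"
  have "(\<integral>\<^sup>+ \<omega> \<in> A. ennreal (X \<omega> / Y \<omega>) \<partial>M)
      \<le> (\<integral>\<^sup>+ \<omega>. ennreal ?c * indicator A \<omega> + ennreal ((X \<omega>)\<^sup>2 - ?c) \<partial>M)"
  proof (rule nn_integral_mono_AE)
    show "AE \<omega> in M. ennreal (X \<omega> / Y \<omega>) * indicator A \<omega>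
                     \<le> ennreal ?c * indicator A \<omega> + ennreal ((X \<omega>)\<^sup>2 - ?c)"
      using assms(1) AE_space
    proof eventually_elim
      case (elim \<omega>)
      show ?case
      proof (cases "\<omega> \<in> A")
        case True
        have "ennreal (X \<omega> / Y \<omega>) \<le> ennreal (?c + max 0 ((X \<omega>)\<^sup>2 - ?c))"
          using div_le_inverse_square_plus_excess[of "X \<omega>" \<delta> "Y \<omega>"] elim assms(2,3)
          by (intro ennreal_leI) auto
        also have "\<dots> = ennreal ?c + ennreal ((X \<omega>)\<^sup>2 - ?c)"
          by (simp add: ennreal_plus[symmetric] ennreal_max_0)
        finally show ?thesis using True by simp
      qed simp
    qed
  qed
  also have "\<dots> = ennreal ?c * emeasure M A + (\<integral>\<^sup>+ \<omega>. ennreal ((X \<omega>)\<^sup>2 - ?c) \<partial>M)"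
    by (subst nn_integral_add) (auto simp: nn_integral_cmult_indicator)
  finally show ?thesis .
qed

theorem lemma4:
  fixes M :: "'a measure" and X Y :: "'a \<Rightarrow> real" and \<delta> y :: real
  assumes "prob_space M"
    and "X \<in> borel_measurable M" and "Y \<in> borel_measurable M"
    and "\<And>\<omega>. \<omega> \<in> space M \<Longrightarrow> X \<omega> \<ge> 0"
    and "\<And>\<omega>. \<omega> \<in> space M \<Longrightarrow> Y \<omega> \<ge> 0"
    and "\<delta> > 0"
    and "measure M {\<omega> \<in> space M. Y \<omega> \<le> \<delta>} = 0"
    and "measure M {\<omega> \<in> space M. Y \<omega> < y} > 0"
  shows "emeasure M {\<omega> \<in> space M. Y \<omega> < y}
           * cond_nn_expectation M {\<omega> \<in> space M. Y \<omega> < y} (\<lambda>\<omega>. ennreal (X \<omega> / Y \<omega>))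
         \<le> ennreal (1 / \<delta>\<^sup>2) * emeasure M {\<omega> \<in> space M. Y \<omega> < y}
           + (\<integral>\<^sup>+ x \<in> {1 / \<delta>\<^sup>2..}. emeasure M {\<omega> \<in> space M. X \<omega> \<ge> sqrt x} \<partial>lborel)"
proof -
  interpret prob_space M by fact
  note [measurable] = assms(2,3)
  define A where "A = {\<omega> \<in> space M. Y \<omega> < y}"
  have A_sets[measurable]: "A \<in> sets M" unfolding A_def by measurable
  have "{\<omega> \<in> space M. Y \<omega> \<le> \<delta>} \<in> null_sets M"
    using assms(7) by (auto simp: null_sets_def emeasure_eq_measure)
  then have Y_gt: "AE \<omega> in M. Y \<omega> > \<delta>"
    by (rule AE_I') auto
  have square_tail_le: "emeasure M {\<omega> \<in> space M. x < (X \<omega>)\<^sup>2} \<le> emeasure M {\<omega> \<in> space M. X \<omega> \<ge> sqrt x}"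
    for x
    using assms(4) by (intro emeasure_mono) (auto dest!: real_sqrt_le_mono[OF less_imp_le])
  have "emeasure M A * cond_nn_expectation M A (\<lambda>\<omega>. ennreal (X \<omega> / Y \<omega>))
      = (\<integral>\<^sup>+ \<omega> \<in> A. ennreal (X \<omega> / Y \<omega>) \<partial>M)"
    using assms(8) by (intro emeasure_mult_cond_nn_expectation) (auto simp: A_def emeasure_eq_measure)
  also have "\<dots> \<le> ennreal (1 / \<delta>\<^sup>2) * emeasure M A + (\<integral>\<^sup>+ \<omega>. ennreal ((X \<omega>)\<^sup>2 - 1 / \<delta>\<^sup>2) \<partial>M)"
    using Y_gt assms(4,6) by (intro set_nn_integral_ratio_le) auto
  also have "(\<integral>\<^sup>+ \<omega>. ennreal ((X \<omega>)\<^sup>2 - 1 / \<delta>\<^sup>2) \<partial>M)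
      = (\<integral>\<^sup>+ x \<in> {1 / \<delta>\<^sup>2..}. emeasure M {\<omega> \<in> space M. x < (X \<omega>)\<^sup>2} \<partial>lborel)"
    by (intro nn_integral_excess_eq_tail_integral sigma_finite_measure_axioms) measurable
  also have "\<dots> \<le> (\<integral>\<^sup>+ x \<in> {1 / \<delta>\<^sup>2..}. emeasure M {\<omega> \<in> space M. X \<omega> \<ge> sqrt x} \<partial>lborel)"
    by (intro nn_integral_mono mult_right_mono square_tail_le) auto
  finally show ?thesis
    unfolding A_def by (simp add: add_left_mono)
qed

end
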